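(* Let $\mathbf{A}$ be a countable UL-chain and let $\mathscr{K}_0$ be the class of all finite $\mathbf{A}$-structures $\langle\mathbf{A},\mathbf{M}\rangle$ in the language with a single binary relation symbol $<$ (and no other symbols) such that for all $a,b,c\in M$: (0.1) $\|a<a\|^{\mathbf{A}}_{\mathbf{M}}\ge \bar 1$, and (0.2) $\|(a<b\wedge b<c)\to a<c\|^{\mathbf{A}}_{\mathbf{M}}\ge\bar 1$. Then $\mathscr{K}_0^{\cong}$ is the age of some $\mathbf{A}$-structure.
   Context: A UL-algebra is $\mathbf{A}=\langle A,\wedge,\vee,\&,\to,\bar 0,\bar 1,\bot,\top\rangle$ where $\langle A,\wedge,\vee,\bot,\top\rangle$ is a bounded lattice, $\langle A,\&,\bar 1\rangle$ is a commutative monoid, $a\& b\le c$ iff $b\le a\to c$, and $((a\to b)\wedge\bar 1)\vee((b\to a)\wedge \bar 1)=\bar 1$; a UL-chain is one with linear order. An $\mathbf{A}$-structure for the language $\{<\}$ is a set $M$ with a function $<_{\mathbf{M}}:M^2\to A$; $\|a<b\|^{\mathbf{A}}_{\mathbf{M}}=<_{\mathbf{M}}(a,b)$ and compound quantifier-free formulas are evaluated by the operations of $\mathbf{A}$. A substructure is a subset with the restricted relation; an embedding is an injective map preserving the value of $<$ (hence of all quantifier-free formulas), with the identity on $\mathbf{A}$; an isomorphism is a surjective embedding. $\mathscr{K}^{\cong}$ denotes a class containing exactly one representative of each isomorphism type of members of $\mathscr{K}$. The age of an $\mathbf{A}$-structure is the class, up to isomorphism, of its finitely generated (here: finite) substructures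 and their isomorphic copies. *)

theory Defs
  imports Main "HOL-Library.Countable_Set"
begin

record 'a ul_alg =
  carrier :: "'a set"
  meet :: "'a \<Rightarrow> 'a \<Rightarrow> 'a"
  join :: "'a \<Rightarrow> 'a \<Rightarrow> 'a"
  fus  :: "'a \<Rightarrow> 'a \<Rightarrow> 'a"
  imp  :: "'a \<Rightarrow> 'a \<Rightarrow> 'a"
  zer  :: 'a
  one  :: 'a
  bot  :: 'a
  top  :: 'a

definition ul_le :: "'a ul_alg \<Rightarrow> 'a \<Rightarrow> 'a \<Rightarrow> bool" where
  "ul_le A a b \<longleftrightarrow> meet A a b = a"

definition UL_algebra :: "'a ul_alg \<Rightarrow> bool" where
  "UL_algebra A \<longleftrightarrow>
    (let C = carrier A in
     \<comment> \<open>closure of the carrier under the operations\<close>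
     (\<forall>a\<in>C. \<forall>b\<in>C. meet A a b \<in> C \<and> join A a b \<in> C \<and> fus A a b \<in> C \<and> imp A a b \<in> C) \<and>
     zer A \<in> C \<and> one A \<in> C \<and> bot A \<in> C \<and> top A \<in> C \<and>
     \<comment> \<open>bounded lattice\<close>
     (\<forall>a\<in>C. \<forall>b\<in>C. meet A a b = meet A b a \<and> join A a b = join A b a) \<and>
     (\<forall>a\<in>C. \<forall>b\<in>C. \<forall>c\<in>C. meet A (meet A a b) c = meet A a (meet A b c)
                          \<and> join A (join A a b) c = join A a (join A b c)) \<and>
     (\<forall>a\<in>C. \<forall>b\<in>C. meet A a (join A a b) = a \<and> join A a (meet A a b) = a) \<and>
     (\<forall>a\<in>C. meet A (bot A) a = bot A \<and> meet A (top A) a = a) \<and>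
     \<comment> \<open>commutative monoid\<close>
     (\<forall>a\<in>C. \<forall>b\<in>C. fus A a b = fus A b a) \<and>
     (\<forall>a\<in>C. \<forall>b\<in>C. \<forall>c\<in>C. fus A (fus A a b) c = fus A a (fus A b c)) \<and>
     (\<forall>a\<in>C. fus A (one A) a = a) \<and>
     \<comment> \<open>residuation\<close>
     (\<forall>a\<in>C. \<forall>b\<in>C. \<forall>c\<in>C. ul_le A (fus A a b) c \<longleftrightarrow> ul_le A b (imp A a c)) \<and>
     \<comment> \<open>prelinearity\<close>
     (\<forall>a\<in>C. \<forall>b\<in>C. join A (meet A (imp A a b) (one A)) (meet A (imp A b a) (one A)) = one A))"

definition UL_chain :: "'a ul_alg \<Rightarrow> bool" where
  "UL_chain A \<longleftrightarrow> UL_algebra A \<and>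
     (\<forall>a\<in>carrier A. \<forall>b\<in>carrier A. ul_le A a b \<or> ul_le A b a)"

text \<open>An A-structure for the language with one binary relation symbol: a carrier set M
  together with a map M x M -> carrier A (values outside M are irrelevant).\<close>

definition A_structure :: "'a ul_alg \<Rightarrow> 'b set \<Rightarrow> ('b \<Rightarrow> 'b \<Rightarrow> 'a) \<Rightarrow> bool" where
  "A_structure A M R \<longleftrightarrow> (\<forall>x\<in>M. \<forall>y\<in>M. R x y \<in> carrier A)"

definition is_embedding ::
  "('b \<Rightarrow> 'c) \<Rightarrow> 'b set \<Rightarrow> ('b \<Rightarrow> 'b \<Rightarrow> 'a) \<Rightarrow> 'c set \<Rightarrow> ('c \<Rightarrow> 'c \<Rightarrow> 'a) \<Rightarrow> bool" where
  "is_embedding f M R N S \<longleftrightarrow> inj_on f M \<and> f ` M \<subseteq> N \<and>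
     (\<forall>x\<in>M. \<forall>y\<in>M. S (f x) (f y) = R x y)"

definition is_isomorphism ::
  "('b \<Rightarrow> 'c) \<Rightarrow> 'b set \<Rightarrow> ('b \<Rightarrow> 'b \<Rightarrow> 'a) \<Rightarrow> 'c set \<Rightarrow> ('c \<Rightarrow> 'c \<Rightarrow> 'a) \<Rightarrow> bool" where
  "is_isomorphism f M R N S \<longleftrightarrow> is_embedding f M R N S \<and> f ` M = N"

definition isomorphic ::
  "'b set \<Rightarrow> ('b \<Rightarrow> 'b \<Rightarrow> 'a) \<Rightarrow> 'c set \<Rightarrow> ('c \<Rightarrow> 'c \<Rightarrow> 'a) \<Rightarrow> bool" where
  "isomorphic M R N S \<longleftrightarrow> (\<exists>f. is_isomorphism f M R N S)"

definition in_age ::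
  "'b set \<Rightarrow> ('b \<Rightarrow> 'b \<Rightarrow> 'a) \<Rightarrow> 'c set \<Rightarrow> ('c \<Rightarrow> 'c \<Rightarrow> 'a) \<Rightarrow> bool" where
  "in_age M R N S \<longleftrightarrow> (\<exists>N0. N0 \<subseteq> N \<and> finite N0 \<and> isomorphic M R N0 S)"

definition in_K0 :: "'a ul_alg \<Rightarrow> 'b set \<Rightarrow> ('b \<Rightarrow> 'b \<Rightarrow> 'a) \<Rightarrow> bool" where
  "in_K0 A M R \<longleftrightarrow> finite M \<and> A_structure A M R \<and>
     (\<forall>a\<in>M. ul_le A (one A) (R a a)) \<and>
     (\<forall>a\<in>M. \<forall>b\<in>M. \<forall>c\<in>M.
        ul_le A (one A) (imp A (meet A (R a b) (R b c)) (R a c)))"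

end

theory Submission
  imports Defs
begin

text \<open>The class \<open>K\<^sub>0\<close> is closed under substructures (its axioms are universal) and under disjoint
  unions in which elements of different components are related by \<open>\<bottom>\<close>: since \<open>\<bottom>\<close> absorbs \<open>\<and>\<close>,
  every instance of (0.2) mixing components has value \<open>\<bottom> \<rightarrow> c \<ge> 1\<close>. Up to isomorphism the finite
  members of \<open>K\<^sub>0\<close> over a countable algebra form a countable family, so the disjoint union of all
  of them is a countable structure whose age is exactly \<open>K\<^sub>0\<close>.\<close>

definition ul_preordered :: "'a ul_alg \<Rightarrow> 'b set \<Rightarrow> ('b \<Rightarrow> 'b \<Rightarrow> 'a) \<Rightarrow> bool" where
  "ul_preordered A M R \<longleftrightarrow> A_structure A M R \<and>
     (\<forall>a\<in>M. ul_le A (one A) (R a a)) \<and>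
     (\<forall>a\<in>M. \<forall>b\<in>M. \<forall>c\<in>M.
        ul_le A (one A) (imp A (meet A (R a b) (R b c)) (R a c)))"

lemma in_K0_iff: "in_K0 A M R \<longleftrightarrow> finite M \<and> ul_preordered A M R"
  unfolding in_K0_def ul_preordered_def by blast

lemma ul_preordered_A_structure: "ul_preordered A M R \<Longrightarrow> A_structure A M R"
  unfolding ul_preordered_def by blast

lemma ul_bot_in_carrier: "UL_algebra A \<Longrightarrow> bot A \<in> carrier A"
  unfolding UL_algebra_def Let_def by blast

lemma ul_meet_bot_left: "UL_algebra A \<Longrightarrow> x \<in> carrier A \<Longrightarrow> meet A (bot A) x = bot A"
  unfolding UL_algebra_def Let_def by blast

lemma ul_meet_bot_right: "UL_algebra A \<Longrightarrow> x \<in> carrier A \<Longrightarrow> meet A x (bot A) = bot A"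
  unfolding UL_algebra_def Let_def by metis

lemma ul_one_le_imp_bot:
  assumes U: "UL_algebra A" and y: "y \<in> carrier A"
  shows "ul_le A (one A) (imp A (bot A) y)"
proof -
  have b: "bot A \<in> carrier A" and o: "one A \<in> carrier A"
    using U unfolding UL_algebra_def Let_def by auto
  have "fus A (bot A) (one A) = fus A (one A) (bot A)"
    using U b o unfolding UL_algebra_def Let_def by blast
  also have "\<dots> = bot A"
    using U b unfolding UL_algebra_def Let_def by blast
  finally have "ul_le A (fus A (bot A) (one A)) y"
    using ul_meet_bot_left[OF U y] unfolding ul_le_def by simp
  then show ?thesis
    using U b o y unfolding UL_algebra_def Let_def by blast
qed

lemma is_embedding_comp:
  assumes "is_embedding g M R N S" and "is_embedding f N S L T"
  shows "is_embedding (f \<circ> g) M R L T"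
proof -
  from assms have "inj_on g M" "g ` M \<subseteq> N" "inj_on f N"
    unfolding is_embedding_def by auto
  then have "inj_on (f \<circ> g) M" by (meson comp_inj_on inj_on_subset)
  with assms show ?thesis unfolding is_embedding_def by (auto simp: image_subset_iff)
qed

lemma ul_preordered_embedding:
  assumes "is_embedding f M R N S" and "ul_preordered A N S"
  shows "ul_preordered A M R"
proof -
  have fM: "\<And>x. x \<in> M \<Longrightarrow> f x \<in> N"
    and eq: "\<And>x y. x \<in> M \<Longrightarrow> y \<in> M \<Longrightarrow> S (f x) (f y) = R x y"
    using assms(1) unfolding is_embedding_def by auto
  show ?thesis
    using assms(2) unfolding ul_preordered_def A_structure_def by (metis fM eq)
qed

lemma in_age_iff_embedding:
  "in_age M R N S \<longleftrightarrow> finite M \<and> (\<exists>f. is_embedding f M R N S)"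
proof
  assume "in_age M R N S"
  then obtain N0 f where "N0 \<subseteq> N" "finite N0" "is_isomorphism f M R N0 S"
    unfolding in_age_def isomorphic_def by blast
  then have "is_embedding f M R N S" and "finite M"
    unfolding is_isomorphism_def is_embedding_def by (auto dest: finite_imageD)
  then show "finite M \<and> (\<exists>f. is_embedding f M R N S)" by blast
next
  assume "finite M \<and> (\<exists>f. is_embedding f M R N S)"
  then obtain f where "finite M" "is_embedding f M R N S" by blast
  then have "is_isomorphism f M R (f ` M) S" and "f ` M \<subseteq> N"
    unfolding is_isomorphism_def is_embedding_def by auto
  with \<open>finite M\<close> show "in_age M R N S"
    unfolding in_age_def isomorphic_def by blast
qed

text \<open>Fixing the relation outside \<open>{0..<n}\<close> to the constant \<open>b\<close> is what makes the normal
  forms of finite structures a countable set.\<close>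

definition normal_structures :: "'a set \<Rightarrow> 'a \<Rightarrow> (nat \<times> (nat \<Rightarrow> nat \<Rightarrow> 'a)) set" where
  "normal_structures C b = {(n, R). (\<forall>x<n. \<forall>y<n. R x y \<in> C) \<and>
                              (\<forall>x y. \<not> (x < n \<and> y < n) \<longrightarrow> R x y = b)}"

lemma countable_normal_structures:
  assumes "countable C"
  shows "countable (normal_structures C b)"
proof -
  define decode :: "'a list list \<Rightarrow> nat \<times> (nat \<Rightarrow> nat \<Rightarrow> 'a)" where
    "decode xss = (length xss, \<lambda>x y. if x < length xss \<and> y < length xss then xss ! x ! y else b)"
    for xss
  have "normal_structures C b \<subseteq> decode ` lists (lists C)"
  proof
    fix p assume "p \<in> normal_structures C b"
    then obtain n R where p: "p = (n, R)" and RC: "\<forall>x<n. \<forall>y<n. R x y \<in> C"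
      and Rb: "\<forall>x y. \<not> (x < n \<and> y < n) \<longrightarrow> R x y = b"
      unfolding normal_structures_def by blast
    let ?xss = "map (\<lambda>x. map (R x) [0..<n]) [0..<n]"
    have "decode ?xss = p"
      using Rb unfolding decode_def p by (auto simp: fun_eq_iff)
    moreover have "?xss \<in> lists (lists C)" using RC by auto
    ultimately show "p \<in> decode ` lists (lists C)" by blast
  qed
  then show ?thesis
    using countable_image countable_lists[OF countable_lists[OF assms]] countable_subset by blast
qed

lemma is_isomorphism_inverse_embedding:
  assumes "is_isomorphism f M R N S"
  shows "is_embedding (the_inv_into M f) N S M R"
proof -
  let ?h = "the_inv_into M f"
  have bij: "bij_betw f M N"
    using assms unfolding is_isomorphism_def is_embedding_def bij_betw_def by blast
  have h: "bij_betw ?h N M" using bij by (rule bij_betw_the_inv_into)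
  have "S x y = R (?h x) (?h y)" if "x \<in> N" "y \<in> N" for x y
  proof -
    have "S x y = S (f (?h x)) (f (?h y))"
      using f_the_inv_into_f_bij_betw[OF bij] that by simp
    also have "\<dots> = R (?h x) (?h y)"
      using assms bij_betwE[OF h] that unfolding is_isomorphism_def is_embedding_def by blast
    finally show ?thesis .
  qed
  with h show ?thesis unfolding is_embedding_def bij_betw_def by simp
qed

lemma isomorphic_normal_structure:
  assumes "finite M" and "A_structure A M R" and "b \<in> carrier A"
  obtains n R' h where "(n, R') \<in> normal_structures (carrier A) b"
    and "is_isomorphism h {0..<n} R' M R"
proof -
  obtain h where h: "bij_betw h {0..<card M} M"
    using ex_bij_betw_nat_finite[OF assms(1)] by blast
  then have hM: "h x \<in> M" if "x < card M" for x
    using bij_betwE that by fastforce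
  define R' where "R' x y = (if x < card M \<and> y < card M then R (h x) (h y) else b)" for x y
  have "(card M, R') \<in> normal_structures (carrier A) b"
    using assms(2,3) hM unfolding normal_structures_def R'_def A_structure_def by auto
  moreover have "is_isomorphism h {0..<card M} R' M R"
    using h unfolding is_isomorphism_def is_embedding_def bij_betw_def R'_def by simp
  ultimately show ?thesis using that by blast
qed

definition sum_carrier :: "(nat \<Rightarrow> nat set) \<Rightarrow> nat set" where
  "sum_carrier M = {prod_encode (k, i) | k i. i \<in> M k}"

definition sum_rel :: "'a \<Rightarrow> (nat \<Rightarrow> nat \<Rightarrow> nat \<Rightarrow> 'a) \<Rightarrow> nat \<Rightarrow> nat \<Rightarrow> 'a" where
  "sum_rel b R u v = (case prod_decode u of (k, i) \<Rightarrow> case prod_decode v of (l, j) \<Rightarrow>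
                        if k = l then R k i j else b)"

lemma sum_rel_prod_encode [simp]:
  "sum_rel b R (prod_encode (k, i)) (prod_encode (l, j)) = (if k = l then R k i j else b)"
  unfolding sum_rel_def by simp

lemma is_embedding_summand:
  "is_embedding (\<lambda>i. prod_encode (k, i)) (M k) (R k) (sum_carrier M) (sum_rel b R)"
  unfolding is_embedding_def sum_carrier_def inj_on_def by (auto dest: inj_onD[OF inj_prod_encode])

lemma ul_preordered_sum:
  assumes U: "UL_algebra A" and summands: "\<And>k. ul_preordered A (M k) (R k)"
  shows "ul_preordered A (sum_carrier M) (sum_rel (bot A) R)"
    (is "ul_preordered A ?N ?S")
proof -
  have SC: "?S u v \<in> carrier A" if "u \<in> ?N" "v \<in> ?N" for u v
    using that summands ul_bot_in_carrier[OF U]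
    unfolding sum_carrier_def ul_preordered_def A_structure_def by auto
  have refl: "ul_le A (one A) (?S u u)" if "u \<in> ?N" for u
    using that summands unfolding sum_carrier_def ul_preordered_def by auto
  have trans: "ul_le A (one A) (imp A (meet A (?S u v) (?S v w)) (?S u w))"
    if uN: "u \<in> ?N" and vN: "v \<in> ?N" and wN: "w \<in> ?N" for u v w
  proof -
    obtain k i l j m p where u: "u = prod_encode (k, i)" "i \<in> M k"
      and v: "v = prod_encode (l, j)" "j \<in> M l"
      and w: "w = prod_encode (m, p)" "p \<in> M m"
      using uN vN wN unfolding sum_carrier_def by blast
    show ?thesis
    proof (cases "k = l \<and> l = m")
      case True
      then show ?thesis using summands[of k] u v w unfolding ul_preordered_def by auto
    next
      case False
      then have "meet A (?S u v) (?S v w) = bot A"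
        using u v w ul_meet_bot_left[OF U SC[OF vN wN]] ul_meet_bot_right[OF U SC[OF uN vN]]
        by (cases "k = l") auto
      then show ?thesis using ul_one_le_imp_bot[OF U SC[OF uN wN]] by simp
    qed
  qed
  show ?thesis
    unfolding ul_preordered_def A_structure_def using SC refl trans by blast
qed

definition normal_K0 :: "'a ul_alg \<Rightarrow> (nat \<times> (nat \<Rightarrow> nat \<Rightarrow> 'a)) set" where
  "normal_K0 A = {p \<in> normal_structures (carrier A) (bot A). ul_preordered A {0..<fst p} (snd p)}"

definition universal_carrier :: "'a ul_alg \<Rightarrow> nat set" where
  "universal_carrier A = sum_carrier (\<lambda>k. {0..<fst (from_nat_into (normal_K0 A) k)})"

definition universal_rel :: "'a ul_alg \<Rightarrow> nat \<Rightarrow> nat \<Rightarrow> 'a" where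
  "universal_rel A = sum_rel (bot A) (\<lambda>k. snd (from_nat_into (normal_K0 A) k))"

lemma ul_preordered_universal:
  assumes "UL_algebra A"
  shows "ul_preordered A (universal_carrier A) (universal_rel A)"
proof -
  have "(0, \<lambda>_ _. bot A) \<in> normal_K0 A"
    unfolding normal_K0_def normal_structures_def ul_preordered_def A_structure_def by simp
  then have "from_nat_into (normal_K0 A) k \<in> normal_K0 A" for k
    by (auto intro: from_nat_into)
  then have "ul_preordered A {0..<fst (from_nat_into (normal_K0 A) k)}
      (snd (from_nat_into (normal_K0 A) k))" for k
    unfolding normal_K0_def by blast
  then show ?thesis
    unfolding universal_carrier_def universal_rel_def by (rule ul_preordered_sum[OF assms])
qed

lemma embedding_into_universal:
  assumes U: "UL_algebra A" and "countable (carrier A)"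
    and "finite M" and M: "ul_preordered A M R"
  obtains f where "is_embedding f M R (universal_carrier A) (universal_rel A)"
proof -
  obtain n R' h where "(n, R') \<in> normal_structures (carrier A) (bot A)"
    and h: "is_isomorphism h {0..<n} R' M R"
    using isomorphic_normal_structure \<open>finite M\<close> ul_preordered_A_structure[OF M]
      ul_bot_in_carrier[OF U] .
  moreover have "ul_preordered A {0..<n} R'"
    using h M ul_preordered_embedding unfolding is_isomorphism_def by blast
  ultimately have nR': "(n, R') \<in> normal_K0 A" unfolding normal_K0_def by simp
  define k where "k = to_nat_on (normal_K0 A) (n, R')"
  have "countable (normal_K0 A)"
    unfolding normal_K0_def using countable_normal_structures[OF assms(2)] by auto
  then have "from_nat_into (normal_K0 A) k = (n, R')"
    unfolding k_def using nR' by simp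
  moreover have "is_embedding (the_inv_into {0..<n} h) M R {0..<n} R'"
    using h by (rule is_isomorphism_inverse_embedding)
  ultimately have "is_embedding (the_inv_into {0..<n} h) M R
      {0..<fst (from_nat_into (normal_K0 A) k)} (snd (from_nat_into (normal_K0 A) k))"
    by simp
  then have "is_embedding ((\<lambda>i. prod_encode (k, i)) \<circ> the_inv_into {0..<n} h) M R
      (universal_carrier A) (universal_rel A)"
    unfolding universal_carrier_def universal_rel_def
    by (rule is_embedding_comp[OF _ is_embedding_summand])
  then show ?thesis using that by blast
qed

theorem proposition1:
  fixes A :: "'a ul_alg"
  assumes "UL_chain A" and "countable (carrier A)"
  shows "\<exists>(N :: nat set) S. A_structure A N S \<and>
           (\<forall>(M :: nat set) R. finite M \<and> A_structure A M R \<longrightarrow>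
              (in_K0 A M R \<longleftrightarrow> in_age M R N S))"
proof -
  have U: "UL_algebra A" using assms(1) unfolding UL_chain_def by simp
  let ?N = "universal_carrier A" and ?S = "universal_rel A"
  have NS: "ul_preordered A ?N ?S" using U by (rule ul_preordered_universal)
  have "in_K0 A M R \<longleftrightarrow> in_age M R ?N ?S" if "finite M" for M :: "nat set" and R
  proof
    assume "in_K0 A M R"
    then obtain f where "is_embedding f M R ?N ?S"
      using embedding_into_universal[OF U assms(2) \<open>finite M\<close>] unfolding in_K0_iff by blast
    with \<open>finite M\<close> show "in_age M R ?N ?S" unfolding in_age_iff_embedding by blast
  next
    assume "in_age M R ?N ?S"
    then show "in_K0 A M R"
      using NS ul_preordered_embedding unfolding in_age_iff_embedding in_K0_iff by blast
  qed
  then show ?thesis using NS ul_preordered_A_structure by blast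
qed

end
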